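(* Let $m\ge2$, consider the simply laced Cartan matrix of type $\tilde A_m$ (graph: the cycle on vertices $1,\dots,m+1$ with edges $\{j,j+1\}$, indices mod $m+1$) with an acyclic orientation, and let $z_1,\dots,z_{m+1}$ be commuting indeterminates. Define the frise with variables by $a(j,0)=z_j$ and $a(j,n)a(j,n+1)=1+\big(\prod_{j\to i}a(i,n)\big)\big(\prod_{i\to j}a(i,n+1)\big)$. Then for each $j$, the sequence $(a(j,n))_{n\in\mathbf N}$ is $K$-rational, where $K=\mathbf N[z_1^{\pm1},\dots,z_{m+1}^{\pm1}]$ is the semiring of Laurent polynomials in the $z_i$ with nonnegative integer coefficients.
   Context: For a commutative semiring $K$, a sequence $(a_n)_{n\in\mathbf N}$ in $K$ is $K$-rational if there exist $r\ge1$, $\lambda\in K^{1\times r}$, $M\in K^{r\times r}$, $\gamma\in K^{r\times1}$ with $a_n=\lambda M^n\gamma$ for all $n$ (equivalently, $\sum a_nX^n$ lies in the smallest subsemiring of $K[[X]]$ containing $K[X]$ and closed under $T\mapsto\sum_{k\ge0}T^k$ for $T$ without constant term). The orientation notation $i\to j$ means the edge $\{i,j\}$ is oriented from $i$ to $j$; the recurrence determines the $a(j,n)$ as rational functions since the orientation is acyclic. *)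

theory Defs
  imports Main "HOL-Library.Poly_Mapping"
begin

text \<open>Laurent polynomials with nonnegative integer coefficients: a monomial is a finitely
supported exponent vector (variable index to integer exponent); a Laurent polynomial maps
monomials to natural-number coefficients (finitely supported).\<close>
type_synonym laurent = "(nat \<Rightarrow>\<^sub>0 int) \<Rightarrow>\<^sub>0 nat"

text \<open>The variable z_j (vertices are numbered 0..m instead of 1..m+1).\<close>
definition zvar :: "nat \<Rightarrow> laurent" where
  "zvar j = Poly_Mapping.single (Poly_Mapping.single j 1) 1"

text \<open>The semiring K = N[z_0^{+-1},...,z_m^{+-1}] as a carrier set: Laurent polynomials
involving only the variables z_0..z_m.\<close>
definition Kset :: "nat \<Rightarrow> laurent set" where
  "Kset m = {p. \<forall>e \<in> Poly_Mapping.keys p. Poly_Mapping.keys e \<subseteq> {..m}}"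

fun matpow :: "nat \<Rightarrow> (nat \<Rightarrow> nat \<Rightarrow> 'a::comm_semiring_1) \<Rightarrow> nat \<Rightarrow> nat \<Rightarrow> nat \<Rightarrow> 'a" where
  "matpow r M 0 = (\<lambda>i j. if i = j then 1 else 0)"
| "matpow r M (Suc n) = (\<lambda>i j. \<Sum>k<r. matpow r M n i k * M k j)"

definition rational_seq :: "'a::comm_semiring_1 set \<Rightarrow> (nat \<Rightarrow> 'a) \<Rightarrow> bool" where
  "rational_seq S a \<longleftrightarrow>
     (\<exists>r::nat. \<exists>lam M gam. r \<ge> 1 \<and>
        (\<forall>i<r. lam i \<in> S) \<and> (\<forall>i<r. \<forall>j<r. M i j \<in> S) \<and> (\<forall>j<r. gam j \<in> S) \<and>
        (\<forall>n. a n = (\<Sum>i<r. \<Sum>j<r. lam i * matpow r M n i j * gam j)))"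

text \<open>Orientation of the cycle of type tilde A_m on vertices 0..m with edges {j, (j+1) mod (m+1)}:
ori j = True means j \<rightarrow> (j+1) mod (m+1), ori j = False means (j+1) mod (m+1) \<rightarrow> j.\<close>
definition arr :: "nat \<Rightarrow> (nat \<Rightarrow> bool) \<Rightarrow> nat \<Rightarrow> nat \<Rightarrow> bool" where
  "arr m ori i j \<longleftrightarrow> i \<le> m \<and> j \<le> m \<and>
     ((j = (i + 1) mod (m + 1) \<and> ori i) \<or> (i = (j + 1) mod (m + 1) \<and> \<not> ori j))"

definition acyclic_orientation :: "nat \<Rightarrow> (nat \<Rightarrow> bool) \<Rightarrow> bool" where
  "acyclic_orientation m ori \<longleftrightarrow> (\<forall>i. \<not> (arr m ori)\<^sup>+\<^sup>+ i i)"

definition is_frise :: "nat \<Rightarrow> (nat \<Rightarrow> bool) \<Rightarrow> (nat \<Rightarrow> nat \<Rightarrow> laurent) \<Rightarrow> bool" where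
  "is_frise m ori a \<longleftrightarrow>
     (\<forall>j\<le>m. a j 0 = zvar j) \<and>
     (\<forall>j\<le>m. \<forall>n. a j n * a j (Suc n) =
        1 + (\<Prod>i\<in>{i. i \<le> m \<and> arr m ori j i}. a i n) * (\<Prod>i\<in>{i. i \<le> m \<and> arr m ori i j}. a i (Suc n)))"

end

theory Submission
  imports Defs
begin

(* We follow the matrix description of friezes.  Extend the vertex set periodically
   to the integers (period N = m + 1) and call the edge {k, k+1} forward if it is oriented
   k -> k+1.  Each k carries a 2x2 matrix M_k over K, built from z_k, z_{k+1} and z_k^{-1}, of
   lower or upper triangular shape according to the direction of the edge.  For i <= l put
   lam i l = z_i * (M_i ... M_{l-1})_{11}.  Determinants of the partial products and the
   Pluecker relation between 2x2 brackets give an exchange ("Ptolemy") relation between four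
   such entries; since K has no subtraction, these identities are verified after embedding K
   into Laurent polynomials with integer coefficients.
   Starting from j, a decreasing walk lpos j n jumps to the previous backward edge and an
   increasing walk rpos j n jumps past the next forward edge (acyclicity guarantees that both
   kinds of edges exist).  Then a j n = lam (lpos j n) (rpos j n) satisfies the frieze
   recurrence, by the exchange relation and the way the walks of neighbouring vertices
   interlace.  Finally the matrix product for step n+1 is a left factor times the one for step
   n times a right factor, both depending only on the residues of the walk positions mod N;
   a general lemma turns such an automaton-driven linear recurrence into a representation
   lambda M^n gamma over K. *)

section \<open>Integer-coefficient shadows of Laurent polynomials\<close>

text \<open>The injective semiring homomorphism from Laurent polynomials with natural-number
  coefficients to those with integer coefficients; identities involving subtraction are
  proved after this embedding.\<close>

type_synonym ilaurent = "(nat \<Rightarrow>\<^sub>0 int) \<Rightarrow>\<^sub>0 int"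

definition int_coeffs :: "laurent \<Rightarrow> ilaurent" where
  "int_coeffs p = Poly_Mapping.map int p"

lemma lookup_int_coeffs: "Poly_Mapping.lookup (int_coeffs p) k = int (Poly_Mapping.lookup p k)"
  unfolding int_coeffs_def by transfer (simp add: when_def)

lemma int_Sum_any:
  assumes "finite {a. F a \<noteq> 0}"
  shows "int (Sum_any F) = Sum_any (\<lambda>a. int (F a))"
proof -
  have "{a. int (F a) \<noteq> 0} = {a. F a \<noteq> 0}" by auto
  then show ?thesis by (simp add: Sum_any.expand_set)
qed

lemma int_coeffs_mult: "int_coeffs (p * q) = int_coeffs p * int_coeffs q"
proof (rule poly_mapping_eqI)
  fix k
  let ?c = "\<lambda>l. \<Sum>l'. Poly_Mapping.lookup q l' when k = l + l'"
  have fin_q: "finite {l'. (Poly_Mapping.lookup q l' when k = l + l') \<noteq> 0}" for l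
    by (rule finite_subset[of _ "Poly_Mapping.keys q"]) (auto simp: in_keys_iff when_def)
  have fin_p: "finite {l. Poly_Mapping.lookup p l * ?c l \<noteq> 0}"
    by (rule finite_subset[of _ "Poly_Mapping.keys p"]) (auto simp: in_keys_iff when_def)
  have inner: "int (?c l) = (\<Sum>l'. int (Poly_Mapping.lookup q l') when k = l + l')" for l
    unfolding int_Sum_any[OF fin_q] by (rule Sum_any.cong) (simp add: when_def)
  have "Poly_Mapping.lookup (int_coeffs (p * q)) k = (\<Sum>l. int (Poly_Mapping.lookup p l * ?c l))"
    by (simp add: lookup_int_coeffs lookup_mult int_Sum_any[OF fin_p])
  also have "\<dots> = Poly_Mapping.lookup (int_coeffs p * int_coeffs q) k"
    by (simp add: lookup_mult lookup_int_coeffs inner)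
  finally show "Poly_Mapping.lookup (int_coeffs (p * q)) k
      = Poly_Mapping.lookup (int_coeffs p * int_coeffs q) k" .
qed

lemma int_coeffs_add: "int_coeffs (p + q) = int_coeffs p + int_coeffs q"
  by (rule poly_mapping_eqI) (simp add: lookup_int_coeffs lookup_add)

lemma int_coeffs_one: "int_coeffs 1 = 1"
  by (rule poly_mapping_eqI) (simp add: lookup_int_coeffs lookup_one when_def)

lemma int_coeffs_zero: "int_coeffs 0 = 0"
  by (rule poly_mapping_eqI) (simp add: lookup_int_coeffs)

lemma int_coeffs_inj: "int_coeffs p = int_coeffs q \<Longrightarrow> p = q"
  by (rule poly_mapping_eqI) (metis lookup_int_coeffs of_nat_eq_iff)

text \<open>The inverse of the variable z_j; it lies in K, which is what makes the matrices
  below have entries in K.\<close>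

definition zinv :: "nat \<Rightarrow> laurent" where
  "zinv j = Poly_Mapping.single (Poly_Mapping.single j (-1)) 1"

lemma zvar_zinv: "zvar j * zinv j = 1"
  using single_one[where 'a="nat \<Rightarrow>\<^sub>0 int" and 'b=nat]
  by (simp add: zvar_def zinv_def mult_single flip: single_add)

lemma Kset_zero: "0 \<in> Kset m"
  by (simp add: Kset_def)

lemma Kset_one: "1 \<in> Kset m"
  by (simp add: Kset_def)

lemma Kset_add: "p \<in> Kset m \<Longrightarrow> q \<in> Kset m \<Longrightarrow> p + q \<in> Kset m"
  unfolding Kset_def using keys_add[of p q] by blast

lemma Kset_mult:
  assumes "p \<in> Kset m" "q \<in> Kset m"
  shows "p * q \<in> Kset m"
  unfolding Kset_def mem_Collect_eq
proof
  fix e assume "e \<in> Poly_Mapping.keys (p * q)"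
  then obtain a b where "e = a + b" "a \<in> Poly_Mapping.keys p" "b \<in> Poly_Mapping.keys q"
    using keys_mult[of p q] by blast
  then show "Poly_Mapping.keys e \<subseteq> {..m}"
    using assms keys_add[of a b] unfolding Kset_def by blast
qed

lemma zvar_Kset: "j \<le> m \<Longrightarrow> zvar j \<in> Kset m"
  by (simp add: Kset_def zvar_def)

lemma zinv_Kset: "j \<le> m \<Longrightarrow> zinv j \<in> Kset m"
  by (simp add: Kset_def zinv_def)

section \<open>2x2 matrices\<close>

text \<open>A 2x2 matrix is the tuple (a, b, c, d) of its entries in row-major order; this is
  all the linear algebra the argument needs.\<close>

type_synonym 'a mat2 = "'a \<times> 'a \<times> 'a \<times> 'a"

fun mat_mult :: "'a::comm_semiring_1 mat2 \<Rightarrow> 'a mat2 \<Rightarrow> 'a mat2" where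
  "mat_mult (a, b, c, d) (e, f, g, h) = (a*e + b*g, a*f + b*h, c*e + d*g, c*f + d*h)"

definition mat_one :: "'a::comm_semiring_1 mat2" where
  "mat_one = (1, 0, 0, 1)"

lemma mat_mult_assoc: "mat_mult (mat_mult A B) C = mat_mult A (mat_mult B C)"
  by (cases A; cases B; cases C) (simp add: algebra_simps)

lemma mat_one_left: "mat_mult mat_one A = A"
  by (cases A) (simp add: mat_one_def)

lemma mat_one_right: "mat_mult A mat_one = A"
  by (cases A) (simp add: mat_one_def)

fun mat_int_coeffs :: "laurent mat2 \<Rightarrow> ilaurent mat2" where
  "mat_int_coeffs (a, b, c, d) = (int_coeffs a, int_coeffs b, int_coeffs c, int_coeffs d)"

lemma mat_int_coeffs_mult: "mat_int_coeffs (mat_mult A B) = mat_mult (mat_int_coeffs A) (mat_int_coeffs B)"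
  by (cases A; cases B) (simp add: int_coeffs_add int_coeffs_mult)

fun mat_det :: "'a::comm_ring_1 mat2 \<Rightarrow> 'a" where
  "mat_det (a, b, c, d) = a*d - b*c"

lemma mat_det_mult: "mat_det (mat_mult A B) = mat_det A * mat_det B"
  by (cases A; cases B) (simp add: algebra_simps)

fun col1 :: "'a mat2 \<Rightarrow> 'a \<times> 'a" where "col1 (a, b, c, d) = (a, c)"
fun col2 :: "'a mat2 \<Rightarrow> 'a \<times> 'a" where "col2 (a, b, c, d) = (b, d)"

fun bracket :: "'a::comm_ring_1 \<times> 'a \<Rightarrow> 'a \<times> 'a \<Rightarrow> 'a" where
  "bracket (u1, u2) (v1, v2) = u1*v2 - u2*v1"

text \<open>The three-term Pluecker relation among the brackets of four vectors in the plane; it is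
  the algebraic source of the exchange relation of the frieze.\<close>

lemma pluecker: "bracket a c * bracket b d = bracket b c * bracket a d + bracket a b * bracket c d"
  by (cases a; cases b; cases c; cases d) (simp add: algebra_simps)

section \<open>Acyclic orientations of the cycle\<close>

lemma tranclp_around_cycle:
  assumes step: "\<And>k. k < m \<Longrightarrow> R k (Suc k)" and close: "R m 0"
  shows "R\<^sup>+\<^sup>+ 0 0"
proof -
  have "R\<^sup>*\<^sup>* 0 k" if "k \<le> m" for k
    using that
  proof (induction k)
    case (Suc k)
    then show ?case using rtranclp.rtrancl_into_rtrancl[of R 0 k "Suc k"] step[of k] by simp
  qed simp
  then have "R\<^sup>*\<^sup>* 0 m" by simp
  from this close show ?thesis by (rule rtranclp_into_tranclp1)
qed

lemma acyclic_forward_edge: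
  assumes "acyclic_orientation m ori"
  shows "\<exists>k\<le>m. ori k"
proof (rule ccontr)
  assume "\<not> ?thesis"
  then have bwd: "arr m ori ((k + 1) mod (m + 1)) k" if "k \<le> m" for k
    using that by (auto simp: arr_def)
  have "(conversep (arr m ori))\<^sup>+\<^sup>+ 0 0"
  proof (rule tranclp_around_cycle)
    show "(conversep (arr m ori)) k (Suc k)" if "k < m" for k
      using bwd[of k] that by simp
    show "(conversep (arr m ori)) m 0" using bwd[of m] by simp
  qed
  then have "(arr m ori)\<^sup>+\<^sup>+ 0 0" by (simp add: tranclp_converse)
  with assms show False by (simp add: acyclic_orientation_def)
qed

lemma acyclic_backward_edge:
  assumes "acyclic_orientation m ori"
  shows "\<exists>k\<le>m. \<not> ori k"
proof (rule ccontr)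
  assume "\<not> ?thesis"
  then have fwd: "arr m ori k ((k + 1) mod (m + 1))" if "k \<le> m" for k
    using that by (auto simp: arr_def)
  have "(arr m ori)\<^sup>+\<^sup>+ 0 0"
  proof (rule tranclp_around_cycle)
    show "arr m ori k (Suc k)" if "k < m" for k using fwd[of k] that by simp
    show "arr m ori m 0" using fwd[of m] by simp
  qed
  with assms show False by (simp add: acyclic_orientation_def)
qed

definition succ_v :: "nat \<Rightarrow> nat \<Rightarrow> nat" where
  "succ_v m j = (j + 1) mod (m + 1)"

definition pred_v :: "nat \<Rightarrow> nat \<Rightarrow> nat" where
  "pred_v m j = (j + m) mod (m + 1)"

lemma succ_v_eq: "j \<le> m \<Longrightarrow> succ_v m j = (if j = m then 0 else j + 1)"
  by (auto simp: succ_v_def)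

lemma pred_v_eq: "j \<le> m \<Longrightarrow> pred_v m j = (if j = 0 then m else j - 1)"
proof -
  assume j: "j \<le> m"
  show ?thesis
  proof (cases "j = 0")
    case False
    then have "j + m = (j - 1) + (m + 1)" by simp
    then have "(j + m) mod (m + 1) = (j - 1) mod (m + 1)" by (metis mod_add_self2)
    with False j show ?thesis by (simp add: pred_v_def)
  qed (simp add: pred_v_def)
qed

lemma succ_ne_pred_v: "2 \<le> m \<Longrightarrow> j \<le> m \<Longrightarrow> succ_v m j \<noteq> pred_v m j"
  by (auto simp: succ_v_eq pred_v_eq)

lemma arr_from_iff:
  assumes "j \<le> m" "i \<le> m"
  shows "arr m ori j i \<longleftrightarrow> (i = succ_v m j \<and> ori j) \<or> (i = pred_v m j \<and> \<not> ori (pred_v m j))"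
  using succ_v_eq[OF assms(1)] succ_v_eq[OF assms(2)] pred_v_eq[OF assms(1)] assms
  unfolding arr_def succ_v_def pred_v_def by (auto split: if_splits)

lemma arr_to_iff:
  assumes "j \<le> m" "i \<le> m"
  shows "arr m ori i j \<longleftrightarrow> (i = pred_v m j \<and> ori (pred_v m j)) \<or> (i = succ_v m j \<and> \<not> ori j)"
  using succ_v_eq[OF assms(1)] succ_v_eq[OF assms(2)] pred_v_eq[OF assms(1)] assms
  unfolding arr_def succ_v_def pred_v_def by (auto split: if_splits)


lemma arr_from_set:
  assumes "j \<le> m"
  shows "{i. i \<le> m \<and> arr m ori j i}
       = {i. i \<le> m \<and> ((i = succ_v m j \<and> ori j) \<or> (i = pred_v m j \<and> \<not> ori (pred_v m j)))}"
  by (intro Collect_cong) (use arr_from_iff[OF assms] in fastforce)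

lemma arr_to_set:
  assumes "j \<le> m"
  shows "{i. i \<le> m \<and> arr m ori i j}
       = {i. i \<le> m \<and> ((i = pred_v m j \<and> ori (pred_v m j)) \<or> (i = succ_v m j \<and> \<not> ori j))}"
  by (intro Collect_cong) (use arr_to_iff[OF assms] in fastforce)


section \<open>Rational sequences driven by a finite automaton\<close>

lemma row_matpow_Suc:
  "(\<Sum>i<r. v i * matpow r M (Suc n) i j) = (\<Sum>k<r. (\<Sum>i<r. v i * matpow r M n i k) * M k j)"
  by (simp add: sum_distrib_left sum_distrib_right mult.assoc) (rule sum.swap)

text \<open>Vectors of length P*d are viewed as P blocks of length d.\<close>

definition block_vec :: "nat \<Rightarrow> nat \<Rightarrow> (nat \<Rightarrow> 'a::zero) \<Rightarrow> nat \<Rightarrow> 'a" where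
  "block_vec d p v k = (if k div d = p then v (k mod d) else 0)"

definition block_mat ::
    "nat \<Rightarrow> nat \<Rightarrow> (nat \<Rightarrow> nat) \<Rightarrow> (nat \<Rightarrow> nat \<Rightarrow> nat \<Rightarrow> 'a) \<Rightarrow> nat \<Rightarrow> nat \<Rightarrow> 'a::zero" where
  "block_mat P d g T k k' =
     (if k div d < P \<and> k' div d = g (k div d) then T (k div d) (k mod d) (k' mod d) else 0)"

lemma block_vec_dot:
  fixes w :: "nat \<Rightarrow> 'a::comm_semiring_1"
  assumes "p < P" "0 < d"
  shows "(\<Sum>k<P*d. block_vec d p v k * w k) = (\<Sum>r<d. v r * w (p*d + r))"
proof -
  have block: "{k \<in> {..<P*d}. k div d = p} = (\<lambda>r. p*d + r) ` {..<d}"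
  proof (intro equalityI subsetI)
    fix k assume "k \<in> {k \<in> {..<P*d}. k div d = p}"
    then have "k = p*d + k mod d" "k mod d < d" using assms by (auto simp: mult.commute)
    then show "k \<in> (\<lambda>r. p*d + r) ` {..<d}" by blast
  next
    fix k assume "k \<in> (\<lambda>r. p*d + r) ` {..<d}"
    then obtain r where r: "r < d" "k = p*d + r" by auto
    have "p*d + r < (p + 1) * d" using r by simp
    also have "\<dots> \<le> P*d" using assms by (intro mult_right_mono) auto
    finally show "k \<in> {k \<in> {..<P*d}. k div d = p}" using r assms by simp
  qed
  have "(\<Sum>k<P*d. block_vec d p v k * w k) = (\<Sum>k \<in> {k \<in> {..<P*d}. k div d = p}. v (k mod d) * w k)"
    by (subst sum.inter_filter) (auto simp: block_vec_def intro: sum.cong)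
  also have "\<dots> = (\<Sum>r<d. v r * w (p*d + r))"
    unfolding block by (subst sum.reindex) (auto simp: inj_on_def intro: sum.cong)
  finally show ?thesis .
qed

lemma block_vec_times_block_mat:
  fixes T :: "nat \<Rightarrow> nat \<Rightarrow> nat \<Rightarrow> 'a::comm_semiring_1"
  assumes "p < P" "0 < d"
  shows "(\<Sum>k'<P*d. block_vec d p v k' * block_mat P d g T k' k)
       = block_vec d (g p) (\<lambda>r'. \<Sum>r<d. v r * T p r r') k"
proof -
  have "(\<Sum>k'<P*d. block_vec d p v k' * block_mat P d g T k' k)
      = (\<Sum>r<d. v r * block_mat P d g T (p*d + r) k)"
    by (rule block_vec_dot[OF assms])
  also have "\<dots> = (\<Sum>r<d. v r * (if k div d = g p then T p r (k mod d) else 0))"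
    by (rule sum.cong) (use assms in \<open>auto simp: block_mat_def\<close>)
  also have "\<dots> = block_vec d (g p) (\<lambda>r'. \<Sum>r<d. v r * T p r r') k"
    by (simp add: block_vec_def)
  finally show ?thesis .
qed

text \<open>A finite automaton with states below P moves by g
  from state ph n to ph (n + 1); a vector Y n of length d is multiplied at each step by the
  matrix T (ph n) of the current state, and the sequence reads a n off Y n through the output
  vector out (ph n).  Stacking the P blocks turns this into a single linear recurrence of size
  P*d with entries in S.\<close>

lemma automaton_rational:
  fixes S :: "'a::comm_semiring_1 set" and P d :: nat
  assumes "0 \<in> S" and "0 < P" "0 < d"
    and state_bound: "\<And>n. ph n < P" and state_step: "\<And>n. ph (Suc n) = g (ph n)"
    and vec_step: "\<And>n r'. r' < d \<Longrightarrow> Y (Suc n) r' = (\<Sum>r<d. Y n r * T (ph n) r r')"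
    and init_S: "\<And>r. r < d \<Longrightarrow> Y 0 r \<in> S"
    and trans_S: "\<And>p r r'. p < P \<Longrightarrow> r < d \<Longrightarrow> r' < d \<Longrightarrow> T p r r' \<in> S"
    and out_S: "\<And>p r. p < P \<Longrightarrow> r < d \<Longrightarrow> out p r \<in> S"
    and readout: "\<And>n. a n = (\<Sum>r<d. Y n r * out (ph n) r)"
  shows "rational_seq S a"
proof -
  define R where "R = P * d"
  define lam0 where "lam0 = block_vec d (ph 0) (Y 0)"
  define M where "M = block_mat P d g T"
  define gam where "gam k = out (k div d) (k mod d)" for k
  have row: "(\<Sum>i<R. lam0 i * matpow R M n i k) = block_vec d (ph n) (Y n) k" if "k < R" for n k
    using that
  proof (induction n arbitrary: k)
    case 0
    have "(\<Sum>i<R. lam0 i * matpow R M 0 i k) = (\<Sum>i<R. if i = k then lam0 i else 0)"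
      by (rule sum.cong) auto
    also have "\<dots> = block_vec d (ph 0) (Y 0) k"
      using 0 by (simp add: lam0_def)
    finally show ?case .
  next
    case (Suc n)
    have "(\<Sum>i<R. lam0 i * matpow R M (Suc n) i k) = (\<Sum>k'<R. block_vec d (ph n) (Y n) k' * M k' k)"
      unfolding row_matpow_Suc by (rule sum.cong) (simp_all add: Suc.IH)
    also have "\<dots> = block_vec d (ph (Suc n)) (Y (Suc n)) k"
      unfolding M_def R_def block_vec_times_block_mat[OF state_bound \<open>0 < d\<close>]
      using \<open>0 < d\<close> by (simp add: block_vec_def vec_step state_step)
    finally show ?case .
  qed
  have rep: "a n = (\<Sum>i<R. \<Sum>j<R. lam0 i * matpow R M n i j * gam j)" for n
  proof -
    have "(\<Sum>i<R. \<Sum>j<R. lam0 i * matpow R M n i j * gam j)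
        = (\<Sum>j<R. (\<Sum>i<R. lam0 i * matpow R M n i j) * gam j)"
      by (subst sum.swap) (simp add: sum_distrib_right)
    also have "\<dots> = (\<Sum>j<R. block_vec d (ph n) (Y n) j * gam j)"
      by (rule sum.cong) (simp_all add: row)
    also have "\<dots> = (\<Sum>r<d. Y n r * gam (ph n * d + r))"
      unfolding R_def by (rule block_vec_dot[OF state_bound \<open>0 < d\<close>])
    also have "\<dots> = a n"
      unfolding readout gam_def by (rule sum.cong) simp_all
    finally show ?thesis by simp
  qed
  have div_bound: "k div d < P" if "k < R" for k
    using that \<open>0 < d\<close> by (simp add: R_def less_mult_imp_div_less)
  show ?thesis
    unfolding rational_seq_def
  proof (intro exI conjI allI impI)
    show "1 \<le> R" using \<open>0 < P\<close> \<open>0 < d\<close> by (simp add: R_def)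
    show "lam0 i \<in> S" for i using init_S \<open>0 \<in> S\<close> \<open>0 < d\<close> by (simp add: lam0_def block_vec_def)
    show "M i j \<in> S" if "i < R" for i j
      using trans_S \<open>0 \<in> S\<close> \<open>0 < d\<close> div_bound[OF that] by (simp add: M_def block_mat_def)
    show "gam j \<in> S" if "j < R" for j
      using out_S \<open>0 < d\<close> div_bound[OF that] by (simp add: gam_def)
    show "a n = (\<Sum>i<R. \<Sum>j<R. lam0 i * matpow R M n i j * gam j)" for n by (rule rep)
  qed
qed

fun mat_over :: "'a set \<Rightarrow> 'a mat2 \<Rightarrow> bool" where
  "mat_over S (a, b, c, d) \<longleftrightarrow> a \<in> S \<and> b \<in> S \<and> c \<in> S \<and> d \<in> S"

lemma mat_mult_Kset: "mat_over (Kset m) A \<Longrightarrow> mat_over (Kset m) B \<Longrightarrow> mat_over (Kset m) (mat_mult A B)"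
  by (cases A; cases B) (simp add: Kset_add Kset_mult)

fun mat_entry :: "'a mat2 \<Rightarrow> nat \<Rightarrow> 'a" where
  "mat_entry (a, b, c, d) r = (if r = 0 then a else if r = 1 then b else if r = 2 then c else d)"

lemma mat_entry_Kset: "mat_over (Kset m) A \<Longrightarrow> mat_entry A r \<in> Kset m"
  by (cases A) auto

lemma sum_less_four: "(\<Sum>r<(4::nat). f r) = f 0 + f 1 + f 2 + (f 3 :: 'a::comm_monoid_add)"
proof -
  have "{..<4::nat} = {0, 1, 2, 3}" by auto
  then show ?thesis by (simp add: ac_simps)
qed

lemma mat_entry_sandwich:
  assumes "r' < 4"
  shows "mat_entry (mat_mult A (mat_mult P B)) r'
       = (\<Sum>r<4. mat_entry P r * (mat_entry A (2 * (r' div 2) + r div 2) * mat_entry B (2 * (r mod 2) + r' mod 2)))"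
proof -
  have "r' = 0 \<or> r' = 1 \<or> r' = 2 \<or> r' = 3" using assms by auto
  then show ?thesis
    unfolding sum_less_four by (cases A; cases P; cases B) (auto simp: algebra_simps)
qed

section \<open>The periodic matrix model of the frieze\<close>

lemma periodic_mod:
  fixes c :: int
  assumes "\<And>i. f (i + c) = f i"
  shows "f i = f (i mod c)"
proof -
  have "f (x + c * k) = f x" for x k
  proof (induction k rule: int_induct[of _ 0])
    case (step1 k) then show ?case using assms[of "x + c * k"] by (simp add: algebra_simps)
  next
    case (step2 k) then show ?case using assms[of "x + c * (k - 1)"] by (simp add: algebra_simps)
  qed simp
  from this[of "i mod c" "i div c"] show ?thesis by simp
qed

locale periodic_cycle =
  fixes m :: nat and ori :: "nat \<Rightarrow> bool"
begin

text \<open>The period N = m + 1 and the orientation extended periodically to the integers: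
  fwd k says that the edge {k, k+1} is oriented k -> k+1.  The variables are extended
  periodically in the same way.\<close>

definition N :: int where "N = int m + 1"

lemma N_pos: "N > 0"
  by (simp add: N_def)

definition fwd :: "int \<Rightarrow> bool" where "fwd k = ori (nat (k mod N))"
definition x_at :: "int \<Rightarrow> laurent" where "x_at k = zvar (nat (k mod N))"
definition y_at :: "int \<Rightarrow> laurent" where "y_at k = zinv (nat (k mod N))"

lemma x_y_at: "x_at k * y_at k = 1"
  by (simp add: x_at_def y_at_def zvar_zinv)

lemma fwd_periodic: "fwd (k + N) = fwd k"
  by (simp add: fwd_def)

lemma x_at_periodic: "x_at (k + N) = x_at k"
  by (simp add: x_at_def)

lemma y_at_periodic: "y_at (k + N) = y_at k"
  by (simp add: y_at_def)

lemma fwd_nat: "k \<le> m \<Longrightarrow> fwd (int k) = ori k"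
  by (simp add: fwd_def N_def)

lemma x_at_Kset: "x_at k \<in> Kset m"
  using pos_mod_bound[of "int m + 1" k] by (simp add: x_at_def N_def zvar_Kset nat_le_iff)

lemma y_at_Kset: "y_at k \<in> Kset m"
  using pos_mod_bound[of "int m + 1" k] by (simp add: y_at_def N_def zinv_Kset nat_le_iff)

text \<open>The transfer matrix of the edge {k, k+1}, lower triangular for a forward and upper
  triangular for a backward edge; its determinant is x_{k+1} / x_k.\<close>

definition step_mat :: "int \<Rightarrow> laurent mat2" where
  "step_mat k = (if fwd k then (x_at (k+1) * y_at k, 0, y_at k, 1)
                 else (1, y_at k, 0, x_at (k+1) * y_at k))"

lemma step_mat_periodic: "step_mat (k + N) = step_mat k"
proof -
  have "x_at (k + N + 1) = x_at (k + 1)"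
    using x_at_periodic[of "k + 1"] by (simp add: ac_simps)
  then show ?thesis by (simp add: step_mat_def fwd_periodic y_at_periodic)
qed

lemma step_mat_Kset: "mat_over (Kset m) (step_mat k)"
  by (simp add: step_mat_def x_at_Kset y_at_Kset Kset_mult Kset_zero Kset_one)

primrec mat_prod :: "int \<Rightarrow> nat \<Rightarrow> laurent mat2" where
  "mat_prod i 0 = mat_one"
| "mat_prod i (Suc n) = mat_mult (mat_prod i n) (step_mat (i + int n))"

lemma mat_prod_add: "mat_prod i (a + b) = mat_mult (mat_prod i a) (mat_prod (i + int a) b)"
  by (induction b) (simp_all add: mat_one_right mat_mult_assoc ac_simps)

lemma mat_prod_Suc_left: "mat_prod i (Suc n) = mat_mult (step_mat i) (mat_prod (i + 1) n)"
  using mat_prod_add[of i 1 n] by (simp add: mat_one_left)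

lemma mat_prod_periodic: "mat_prod (i + N) n = mat_prod i n"
proof (induction n)
  case (Suc n)
  have "step_mat (i + N + int n) = step_mat (i + int n)"
    using step_mat_periodic[of "i + int n"] by (simp add: ac_simps)
  with Suc show ?case by simp
qed simp

lemma mat_prod_Kset: "mat_over (Kset m) (mat_prod i n)"
  by (induction n) (simp_all add: mat_one_def Kset_zero Kset_one mat_mult_Kset step_mat_Kset)

definition lam :: "int \<Rightarrow> int \<Rightarrow> laurent" where
  "lam i l = x_at i * fst (mat_prod i (nat (l - i)))"

lemma lam_periodic: "lam (i + N) (l + N) = lam i l"
  by (simp add: lam_def x_at_periodic mat_prod_periodic)

lemma lam_drop_left:
  assumes "fwd i" "i + 1 \<le> l"
  shows "lam (i + 1) l = lam i l"
proof -
  have len: "nat (l - i) = Suc (nat (l - (i + 1)))" using assms by simp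
  obtain p1 p2 p3 p4 where P: "mat_prod (i + 1) (nat (l - (i + 1))) = (p1, p2, p3, p4)"
    by (cases "mat_prod (i + 1) (nat (l - (i + 1)))") auto
  have "lam i l = x_at i * (x_at (i + 1) * y_at i * p1)"
    unfolding lam_def len mat_prod_Suc_left P using assms by (simp add: step_mat_def)
  also have "\<dots> = x_at (i + 1) * p1 * (x_at i * y_at i)" by (simp add: ac_simps)
  also have "\<dots> = lam (i + 1) l" by (simp add: x_y_at lam_def P)
  finally show ?thesis by simp
qed

lemma lam_drop_right:
  assumes "\<not> fwd l" "i \<le> l"
  shows "lam i (l + 1) = lam i l"
proof -
  have len: "nat (l + 1 - i) = Suc (nat (l - i))" using assms by simp
  have end_pos: "i + int (nat (l - i)) = l" using assms by simp
  obtain p1 p2 p3 p4 where P: "mat_prod i (nat (l - i)) = (p1, p2, p3, p4)"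
    by (cases "mat_prod i (nat (l - i))") auto
  show ?thesis
    unfolding lam_def len mat_prod.simps end_pos P using assms by (simp add: step_mat_def)
qed

subsection \<open>Brackets of columns and the exchange relation\<close>

text \<open>The same objects with integer coefficients, where determinants are available.\<close>

definition X_at :: "int \<Rightarrow> ilaurent" where "X_at k = int_coeffs (x_at k)"
definition Y_at :: "int \<Rightarrow> ilaurent" where "Y_at k = int_coeffs (y_at k)"
definition prod_int :: "int \<Rightarrow> nat \<Rightarrow> ilaurent mat2" where
  "prod_int i n = mat_int_coeffs (mat_prod i n)"

lemma X_Y_at: "X_at k * Y_at k = 1"
  by (simp add: X_at_def Y_at_def x_y_at flip: int_coeffs_mult) (simp add: int_coeffs_one)

lemma prod_int_Suc: "prod_int s (Suc n) = mat_mult (prod_int s n) (mat_int_coeffs (step_mat (s + int n)))"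
  by (simp add: prod_int_def mat_int_coeffs_mult)

lemma det_step_mat: "mat_det (mat_int_coeffs (step_mat k)) = X_at (k + 1) * Y_at k"
  by (simp add: step_mat_def int_coeffs_mult int_coeffs_one int_coeffs_zero X_at_def Y_at_def)

lemma det_prod_int: "mat_det (prod_int i n) = X_at (i + int n) * Y_at i"
proof (induction n)
  case 0
  then show ?case by (simp add: prod_int_def mat_one_def int_coeffs_one int_coeffs_zero X_Y_at)
next
  case (Suc n)
  have "mat_det (prod_int i (Suc n)) = X_at (i + int n) * Y_at i * (X_at (i + int n + 1) * Y_at (i + int n))"
    by (simp add: prod_int_Suc mat_det_mult det_step_mat Suc)
  also have "\<dots> = (X_at (i + int n) * Y_at (i + int n)) * X_at (i + int n + 1) * Y_at i"
    by (simp add: ac_simps)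
  also have "\<dots> = X_at (i + int (Suc n)) * Y_at i"
    by (simp add: X_Y_at ac_simps)
  finally show ?case .
qed

lemma lam_bracket:
  assumes "s \<le> i" "i \<le> l"
  shows "int_coeffs (lam i l) = X_at s * bracket (col1 (prod_int s (nat (l - s)))) (col2 (prod_int s (nat (i - s))))"
proof -
  have len: "nat (l - s) = nat (i - s) + nat (l - i)" using assms by simp
  have mid: "s + int (nat (i - s)) = i" using assms by simp
  obtain a1 a2 a3 a4 where A: "prod_int s (nat (i - s)) = (a1, a2, a3, a4)"
    by (cases "prod_int s (nat (i - s))") auto
  obtain p1 p2 p3 p4 where P: "mat_int_coeffs (mat_prod i (nat (l - i))) = (p1, p2, p3, p4)"
    by (cases "mat_int_coeffs (mat_prod i (nat (l - i)))") auto
  have det_A: "a1*a4 - a2*a3 = X_at i * Y_at s"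
    using det_prod_int[of s "nat (i - s)"] A mid by simp
  have "prod_int s (nat (l - s)) = mat_mult (prod_int s (nat (i - s))) (mat_int_coeffs (mat_prod i (nat (l - i))))"
    unfolding prod_int_def len mat_prod_add mat_int_coeffs_mult mid ..
  then have "bracket (col1 (prod_int s (nat (l - s)))) (col2 (prod_int s (nat (i - s)))) = p1 * (a1*a4 - a2*a3)"
    using A P by (simp add: algebra_simps)
  then have "X_at s * bracket (col1 (prod_int s (nat (l - s)))) (col2 (prod_int s (nat (i - s))))
      = p1 * X_at i * (X_at s * Y_at s)"
    by (simp add: det_A ac_simps)
  also have "\<dots> = int_coeffs (lam i l)"
    using P by (cases "mat_prod i (nat (l - i))")
      (simp add: lam_def X_Y_at[of s, unfolded X_at_def] int_coeffs_mult X_at_def)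
  finally show ?thesis by simp
qed

lemma col1_step_bwd: "\<not> fwd k \<Longrightarrow> col1 (mat_mult A (mat_int_coeffs (step_mat k))) = col1 A"
  by (cases A) (simp add: step_mat_def int_coeffs_one int_coeffs_zero)

lemma bracket_col1_step_fwd:
  "fwd k \<Longrightarrow> bracket (col1 A) (col1 (mat_mult A (mat_int_coeffs (step_mat k)))) = Y_at k * mat_det A"
  by (cases A) (simp add: step_mat_def int_coeffs_one int_coeffs_zero int_coeffs_mult Y_at_def algebra_simps)

lemma col2_step_fwd: "fwd k \<Longrightarrow> col2 (mat_mult A (mat_int_coeffs (step_mat k))) = col2 A"
  by (cases A) (simp add: step_mat_def int_coeffs_one int_coeffs_zero)

lemma col1_bwd_run:
  "(\<forall>t'<t. \<not> fwd (s + int n + int t')) \<Longrightarrow> col1 (prod_int s (n + t)) = col1 (prod_int s n)"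
proof (induction t)
  case (Suc t)
  then have "\<not> fwd (s + int (n + t))" by (simp add: add.assoc)
  with Suc show ?case by (simp add: prod_int_Suc col1_step_bwd)
qed simp

lemma col2_fwd_run:
  "(\<forall>t'<t. fwd (s + 1 + int t')) \<Longrightarrow> col2 (prod_int s (Suc t)) = col2 (prod_int s 1)"
proof (induction t)
  case (Suc t)
  then have "fwd (s + int (Suc t))" by (simp add: add.assoc)
  with Suc show ?case by (simp add: prod_int_Suc[of s "Suc t"] col2_step_fwd)
qed simp

text \<open>Consider positions s < s+u <= s+u+v < s+u+v+w where the edge at
  s is backward, the edges strictly between s and s+u are forward, the edges from s+u+v up to
  the last one are backward and the last edge (at s+u+v+w-1) is forward.  Then the four
  entries with left ends s, s+u and right ends s+u+v, s+u+v+w satisfy a Ptolemy relation: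
  both exceptional brackets equal y_s, and the Pluecker relation does the rest.\<close>

lemma exchange:
  fixes s :: int and u v w :: nat
  assumes "u \<ge> 1" and "w \<ge> 1" and first_bwd: "\<not> fwd s"
    and left_fwd: "\<forall>t. 0 < t \<and> t < u \<longrightarrow> fwd (s + int t)"
    and right_bwd: "\<forall>t. t + 1 < w \<longrightarrow> \<not> fwd (s + int u + int v + int t)"
    and last_fwd: "fwd (s + int u + int v + int w - 1)"
  shows "lam (s + int u) (s + int u + int v) * lam s (s + int u + int v + int w)
       = 1 + lam (s + int u) (s + int u + int v + int w) * lam s (s + int u + int v)"
proof -
  define a where "a = col1 (prod_int s (u + v))"
  define b where "b = col1 (prod_int s (u + v + w))"
  define c where "c = col2 (prod_int s u)"
  define d where "d = col2 (prod_int s 0)"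
  have d_unit: "d = (0, 1)" by (simp add: d_def prod_int_def mat_one_def int_coeffs_zero int_coeffs_one)
  obtain w' where w': "w = Suc w'" using \<open>w \<ge> 1\<close> by (cases w) auto
  have "col1 (prod_int s (u + v + w')) = a"
    unfolding a_def by (rule col1_bwd_run) (use right_bwd w' in \<open>auto simp: add.assoc\<close>)
  moreover have "b = col1 (mat_mult (prod_int s (u + v + w')) (mat_int_coeffs (step_mat (s + int (u + v + w')))))"
    unfolding b_def w' by (simp add: prod_int_Suc)
  moreover have "fwd (s + int (u + v + w'))" using last_fwd w' by (simp add: add.assoc)
  ultimately have "bracket a b = Y_at (s + int (u + v + w')) * mat_det (prod_int s (u + v + w'))"
    using bracket_col1_step_fwd by metis
  also have "\<dots> = (X_at (s + int (u + v + w')) * Y_at (s + int (u + v + w'))) * Y_at s"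
    by (simp add: det_prod_int ac_simps)
  finally have ab: "bracket a b = Y_at s" by (simp add: X_Y_at)
  obtain u' where u': "u = Suc u'" using \<open>u \<ge> 1\<close> by (cases u) auto
  have "c = col2 (prod_int s 1)"
    unfolding c_def u' by (rule col2_fwd_run) (use left_fwd u' in \<open>auto simp: add.assoc\<close>)
  then have cd: "bracket c d = Y_at s"
    using first_bwd by (simp add: d_unit prod_int_def mat_one_def step_mat_def int_coeffs_one int_coeffs_zero Y_at_def)
  have L1: "int_coeffs (lam (s + int u) (s + int u + int v)) = X_at s * bracket a c"
    using lam_bracket[of s "s + int u" "s + int u + int v"] by (simp add: a_def c_def nat_add_distrib)
  have L2: "int_coeffs (lam s (s + int u + int v + int w)) = X_at s * bracket b d"
    using lam_bracket[of s s "s + int u + int v + int w"] by (simp add: b_def d_def nat_add_distrib add.assoc)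
  have L3: "int_coeffs (lam (s + int u) (s + int u + int v + int w)) = X_at s * bracket b c"
    using lam_bracket[of s "s + int u" "s + int u + int v + int w"] by (simp add: b_def c_def nat_add_distrib add.assoc)
  have L4: "int_coeffs (lam s (s + int u + int v)) = X_at s * bracket a d"
    using lam_bracket[of s s "s + int u + int v"] by (simp add: a_def d_def nat_add_distrib)
  have "int_coeffs (lam (s + int u) (s + int u + int v) * lam s (s + int u + int v + int w))
      = X_at s * X_at s * (bracket a c * bracket b d)"
    unfolding int_coeffs_mult L1 L2 by (simp add: ac_simps)
  also have "\<dots> = X_at s * X_at s * (bracket b c * bracket a d) + (X_at s * Y_at s) * (X_at s * Y_at s)"
    by (simp add: pluecker[of a c b d] ab cd algebra_simps)
  also have "\<dots> = int_coeffs (1 + lam (s + int u) (s + int u + int v + int w) * lam s (s + int u + int v))"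
    unfolding int_coeffs_add int_coeffs_one int_coeffs_mult L3 L4 by (simp add: X_Y_at ac_simps)
  finally show ?thesis by (rule int_coeffs_inj)
qed

end


section \<open>The frieze entries as entries of the matrix model\<close>

locale acyclic_cycle = periodic_cycle +
  assumes two_le_m: "2 \<le> m" and acyclic: "acyclic_orientation m ori"
begin

text \<open>By acyclicity, forward edges occur arbitrarily far ahead and backward edges
  arbitrarily far behind any position.\<close>

lemma fwd_ahead: "\<exists>d::nat. fwd (l + int d)"
proof -
  obtain k where k: "k \<le> m" "ori k" using acyclic_forward_edge[OF acyclic] by auto
  let ?d = "nat ((int k - l) mod N)"
  have "(l + int ?d) mod N = int k mod N" using N_pos by (simp add: mod_add_right_eq)
  also have "\<dots> = int k" using k by (simp add: N_def)
  finally have "fwd (l + int ?d) = ori k" by (simp add: fwd_def)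
  with k show ?thesis by blast
qed

lemma bwd_behind: "\<exists>d::nat. \<not> fwd (l - 1 - int d)"
proof -
  obtain k where k: "k \<le> m" "\<not> ori k" using acyclic_backward_edge[OF acyclic] by auto
  let ?d = "nat ((l - 1 - int k) mod N)"
  have "(l - 1 - int ?d) mod N = int k mod N" using N_pos by (simp add: mod_diff_right_eq)
  also have "\<dots> = int k" using k by (simp add: N_def)
  finally have "fwd (l - 1 - int ?d) = ori k" by (simp add: fwd_def)
  with k show ?thesis by blast
qed

definition next_fwd :: "int \<Rightarrow> int" where
  "next_fwd l = l + int (LEAST d. fwd (l + int d))"

definition prev_bwd :: "int \<Rightarrow> int" where
  "prev_bwd i = i - 1 - int (LEAST d. \<not> fwd (i - 1 - int d))"

lemma next_fwd_ge: "l \<le> next_fwd l"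
  by (simp add: next_fwd_def)

lemma fwd_next_fwd: "fwd (next_fwd l)"
  unfolding next_fwd_def using fwd_ahead by (rule LeastI_ex)

lemma not_fwd_before_next_fwd:
  assumes "l \<le> k" "k < next_fwd l"
  shows "\<not> fwd k"
proof -
  have "nat (k - l) < (LEAST d. fwd (l + int d))" using assms by (simp add: next_fwd_def)
  then have "\<not> fwd (l + int (nat (k - l)))" by (rule not_less_Least)
  with assms show ?thesis by simp
qed

lemma prev_bwd_less: "prev_bwd i < i"
  by (simp add: prev_bwd_def)

lemma not_fwd_prev_bwd: "\<not> fwd (prev_bwd i)"
  unfolding prev_bwd_def using bwd_behind by (rule LeastI_ex)

lemma fwd_after_prev_bwd:
  assumes "prev_bwd i < k" "k < i"
  shows "fwd k"
proof -
  have "nat (i - 1 - k) < (LEAST d. \<not> fwd (i - 1 - int d))" using assms by (simp add: prev_bwd_def)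
  then have "\<not> \<not> fwd (i - 1 - int (nat (i - 1 - k)))" by (rule not_less_Least)
  with assms show ?thesis by simp
qed

lemma next_fwd_eqI:
  assumes "l \<le> k" "fwd k" "\<And>k'. l \<le> k' \<Longrightarrow> k' < k \<Longrightarrow> \<not> fwd k'"
  shows "next_fwd l = k"
proof (rule ccontr)
  assume "next_fwd l \<noteq> k"
  then consider "next_fwd l < k" | "k < next_fwd l" by linarith
  then show False
  proof cases
    case 1
    then show False using assms(3)[of "next_fwd l"] next_fwd_ge[of l] fwd_next_fwd[of l] by blast
  next
    case 2
    then show False using not_fwd_before_next_fwd[of l k] assms(1,2) by blast
  qed
qed

lemma prev_bwd_eqI:
  assumes "k < i" "\<not> fwd k" "\<And>k'. k < k' \<Longrightarrow> k' < i \<Longrightarrow> fwd k'"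
  shows "prev_bwd i = k"
proof (rule ccontr)
  assume "prev_bwd i \<noteq> k"
  then consider "prev_bwd i < k" | "k < prev_bwd i" by linarith
  then show False
  proof cases
    case 1
    then show False using fwd_after_prev_bwd[of i k] assms(1,2) by blast
  next
    case 2
    then show False using assms(3)[of "prev_bwd i"] prev_bwd_less[of i] not_fwd_prev_bwd[of i] by blast
  qed
qed

lemma next_fwd_periodic: "next_fwd (l + N) = next_fwd l + N"
proof (rule next_fwd_eqI)
  show "l + N \<le> next_fwd l + N" using next_fwd_ge by simp
  show "fwd (next_fwd l + N)" using fwd_next_fwd by (simp add: fwd_periodic)
  fix k' assume "l + N \<le> k'" "k' < next_fwd l + N"
  then show "\<not> fwd k'"
    using not_fwd_before_next_fwd[of l "k' - N"] fwd_periodic[of "k' - N"] by simp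
qed

lemma prev_bwd_periodic: "prev_bwd (i + N) = prev_bwd i + N"
proof (rule prev_bwd_eqI)
  show "prev_bwd i + N < i + N" using prev_bwd_less by simp
  show "\<not> fwd (prev_bwd i + N)" using not_fwd_prev_bwd by (simp add: fwd_periodic)
  fix k' assume "prev_bwd i + N < k'" "k' < i + N"
  then show "fwd k'"
    using fwd_after_prev_bwd[of i "k' - N"] fwd_periodic[of "k' - N"] by simp
qed

lemma next_fwd_at_fwd: "fwd j \<Longrightarrow> next_fwd j = j"
  by (rule next_fwd_eqI) auto

lemma next_fwd_after_bwd:
  assumes "\<not> fwd j"
  shows "next_fwd (j + 1) = next_fwd j"
proof (rule next_fwd_eqI)
  have "next_fwd j \<noteq> j" using assms fwd_next_fwd[of j] by metis
  then show "j + 1 \<le> next_fwd j" using next_fwd_ge[of j] by simp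
  show "fwd (next_fwd j)" by (rule fwd_next_fwd)
  fix k' assume "j + 1 \<le> k'" "k' < next_fwd j"
  then show "\<not> fwd k'" using not_fwd_before_next_fwd[of j k'] by simp
qed

lemma prev_bwd_after_fwd:
  assumes "fwd j"
  shows "prev_bwd (j + 1) = prev_bwd j"
proof (rule prev_bwd_eqI)
  show "prev_bwd j < j + 1" using prev_bwd_less[of j] by simp
  show "\<not> fwd (prev_bwd j)" by (rule not_fwd_prev_bwd)
  fix k' assume "prev_bwd j < k'" "k' < j + 1"
  then show "fwd k'" using assms fwd_after_prev_bwd[of j k'] by (cases "k' = j") auto
qed

lemma prev_bwd_after_bwd: "\<not> fwd j \<Longrightarrow> prev_bwd (j + 1) = j"
  by (rule prev_bwd_eqI) auto

definition jump :: "int \<Rightarrow> int" where "jump l = next_fwd l + 1"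
definition lpos :: "int \<Rightarrow> nat \<Rightarrow> int" where "lpos j n = (prev_bwd ^^ n) j"
definition rpos :: "int \<Rightarrow> nat \<Rightarrow> int" where "rpos j n = (jump ^^ n) j"

lemma lpos_0 [simp]: "lpos j 0 = j" by (simp add: lpos_def)
lemma rpos_0 [simp]: "rpos j 0 = j" by (simp add: rpos_def)
lemma lpos_Suc: "lpos j (Suc n) = prev_bwd (lpos j n)" by (simp add: lpos_def)
lemma rpos_Suc: "rpos j (Suc n) = jump (rpos j n)" by (simp add: rpos_def)

lemma lpos_Suc_start: "lpos j (Suc n) = lpos (prev_bwd j) n"
  by (simp only: lpos_def funpow_Suc_right comp_apply)

lemma rpos_Suc_start: "rpos j (Suc n) = rpos (jump j) n"
  by (simp only: rpos_def funpow_Suc_right comp_apply)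

lemma lpos_le: "lpos j n \<le> j"
  by (induction n) (auto simp: lpos_Suc intro: order.strict_implies_order[OF prev_bwd_less] order_trans)

lemma rpos_ge: "j \<le> rpos j n"
proof (induction n)
  case (Suc n)
  then show ?case using next_fwd_ge[of "rpos j n"] by (simp add: rpos_Suc jump_def)
qed simp

lemma jump_periodic: "jump (l + N) = jump l + N"
  by (simp add: jump_def next_fwd_periodic)

lemma lpos_periodic: "lpos (j + N) n = lpos j n + N"
  by (induction n) (simp_all add: lpos_Suc prev_bwd_periodic)

lemma rpos_periodic: "rpos (j + N) n = rpos j n + N"
  by (induction n) (simp_all add: rpos_Suc jump_periodic)

definition frise_seq :: "int \<Rightarrow> nat \<Rightarrow> laurent" where
  "frise_seq j n = lam (lpos j n) (rpos j n)"

lemma frise_seq_0: "frise_seq j 0 = x_at j"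
  by (simp add: frise_seq_def lam_def mat_one_def)

lemma frise_seq_periodic: "frise_seq (j + N) n = frise_seq j n"
  by (simp add: frise_seq_def lpos_periodic rpos_periodic lam_periodic)

text \<open>Consecutive levels at one vertex satisfy the exchange relation: the window at level
  n + 1 extends the one at level n by a run of forward edges on the left and a run of
  backward edges ending in a forward edge on the right.\<close>

lemma frise_seq_exchange:
  "frise_seq j n * frise_seq j (Suc n)
     = 1 + lam (lpos j n) (rpos j (Suc n)) * lam (lpos j (Suc n)) (rpos j n)"
proof -
  define i where "i = lpos j n"
  define l where "l = rpos j n"
  define s where "s = prev_bwd i"
  define u where "u = nat (i - s)"
  define v where "v = nat (l - i)"
  define w where "w = nat (next_fwd l + 1 - l)"
  have il: "i \<le> l" unfolding i_def l_def using lpos_le[of j n] rpos_ge[of j n] by simp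
  have si: "s + int u = i" using prev_bwd_less[of i] by (simp add: u_def s_def)
  have sl: "s + int u + int v = l" using si il by (simp add: v_def)
  have sl': "s + int u + int v + int w = next_fwd l + 1" using sl next_fwd_ge[of l] by (simp add: w_def)
  have "lam (s + int u) (s + int u + int v) * lam s (s + int u + int v + int w)
       = 1 + lam (s + int u) (s + int u + int v + int w) * lam s (s + int u + int v)"
  proof (rule exchange)
    show "u \<ge> 1" using prev_bwd_less[of i] by (simp add: u_def s_def)
    show "w \<ge> 1" using next_fwd_ge[of l] by (simp add: w_def)
    show "\<not> fwd s" by (simp add: s_def not_fwd_prev_bwd)
    show "\<forall>t. 0 < t \<and> t < u \<longrightarrow> fwd (s + int t)"
      using fwd_after_prev_bwd[of i] si unfolding s_def by auto
    show "\<forall>t. t + 1 < w \<longrightarrow> \<not> fwd (s + int u + int v + int t)"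
      using not_fwd_before_next_fwd[of l] sl sl' by auto
    show "fwd (s + int u + int v + int w - 1)" using sl' fwd_next_fwd[of l] by simp
  qed
  moreover have "i + int v = l" "l + int w = next_fwd l + 1"
    using il next_fwd_ge[of l] by (simp_all add: v_def w_def)
  ultimately have "lam i l * lam s (next_fwd l + 1) = 1 + lam i (next_fwd l + 1) * lam s l"
    by (simp only: si)
  then show ?thesis
    by (simp add: frise_seq_def lpos_Suc rpos_Suc jump_def i_def l_def s_def)
qed

text \<open>The two factors on the right of the exchange relation are entries at the neighbouring
  vertices j + 1 and j - 1, at level n or n + 1 according to the orientation of the edges
  joining them to j.\<close>

lemma frise_seq_succ_fwd:
  assumes "fwd j"
  shows "frise_seq (j + 1) n = lam (lpos j n) (rpos j (Suc n))"
proof -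
  have R: "rpos (j + 1) k = rpos j (Suc k)" for k
    by (simp add: rpos_Suc_start jump_def next_fwd_at_fwd[OF assms])
  show ?thesis
  proof (cases n)
    case 0
    then show ?thesis
      using lam_drop_left[OF assms, of "j + 1"]
      by (simp add: frise_seq_def R rpos_Suc jump_def next_fwd_at_fwd[OF assms])
  next
    case (Suc n')
    then show ?thesis
      by (simp add: frise_seq_def R lpos_Suc_start prev_bwd_after_fwd[OF assms])
  qed
qed

lemma frise_seq_succ_bwd:
  "\<not> fwd j \<Longrightarrow> frise_seq (j + 1) (Suc n) = lam (lpos j n) (rpos j (Suc n))"
  by (simp add: frise_seq_def lpos_Suc_start prev_bwd_after_bwd rpos_Suc_start jump_def next_fwd_after_bwd)

lemma frise_seq_pred_fwd:
  assumes "fwd (j - 1)"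
  shows "frise_seq (j - 1) (Suc n) = lam (lpos j (Suc n)) (rpos j n)"
proof -
  have "lpos (j - 1) (Suc n) = lpos j (Suc n)"
    using prev_bwd_after_fwd[OF assms] by (simp add: lpos_Suc_start)
  moreover have "rpos (j - 1) (Suc n) = rpos j n"
    using next_fwd_at_fwd[OF assms] by (simp add: rpos_Suc_start jump_def)
  ultimately show ?thesis by (simp add: frise_seq_def)
qed

lemma frise_seq_pred_bwd:
  assumes "\<not> fwd (j - 1)"
  shows "frise_seq (j - 1) n = lam (lpos j (Suc n)) (rpos j n)"
proof -
  have L: "lpos j (Suc n) = lpos (j - 1) n"
    using prev_bwd_after_bwd[OF assms] by (simp add: lpos_Suc_start)
  show ?thesis
  proof (cases n)
    case 0
    then show ?thesis
      using lam_drop_right[OF assms, of "j - 1"] prev_bwd_after_bwd[OF assms]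
      by (simp add: frise_seq_def lpos_Suc)
  next
    case (Suc n')
    have "rpos (j - 1) (Suc n') = rpos j (Suc n')"
      using next_fwd_after_bwd[OF assms] by (simp add: rpos_Suc_start jump_def)
    then show ?thesis using L Suc by (simp add: frise_seq_def)
  qed
qed

lemma frise_seq_succ_v: "j \<le> m \<Longrightarrow> frise_seq (int (succ_v m j)) n = frise_seq (int j + 1) n"
  using frise_seq_periodic[of 0 n] by (auto simp: succ_v_eq N_def add.commute)

lemma frise_seq_pred_v: "j \<le> m \<Longrightarrow> frise_seq (int (pred_v m j)) n = frise_seq (int j - 1) n"
  using frise_seq_periodic[of "-1" n] by (auto simp: pred_v_eq N_def)

lemma fwd_pred_v:
  assumes j: "j \<le> m"
  shows "fwd (int j - 1) = ori (pred_v m j)"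
proof (cases "j = 0")
  case True
  have "fwd (-1) = fwd (-1 + N)" using fwd_periodic[of "-1"] by simp
  also have "\<dots> = ori m" using fwd_nat[of m] by (simp add: N_def)
  finally show ?thesis using True j by (simp add: pred_v_eq)
next
  case False
  then have "int j - 1 = int (j - 1)" by simp
  then show ?thesis using False j fwd_nat[of "j - 1"] by (simp add: pred_v_eq)
qed

lemma frise_seq_is_frise: "is_frise m ori (\<lambda>j n. frise_seq (int j) n)"
  unfolding is_frise_def
proof (intro conjI allI impI)
  fix j assume "j \<le> m"
  then show "frise_seq (int j) 0 = zvar j" by (simp add: frise_seq_0 x_at_def N_def)
next
  fix j n assume j: "j \<le> m"
  let ?p = "pred_v m j" and ?s = "succ_v m j"
  have ps: "?p \<le> m" "?s \<le> m" "?s \<noteq> ?p"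
    using j succ_ne_pred_v[OF two_le_m j] by (auto simp: succ_v_eq pred_v_eq)
  note out_set = arr_from_set[OF j, of ori] and in_set = arr_to_set[OF j, of ori]
  note neighbours = frise_seq_succ_v[OF j] frise_seq_pred_v[OF j]
  note orient = fwd_nat[OF j] fwd_pred_v[OF j]
  note exch = frise_seq_exchange[of "int j" n]
  show "frise_seq (int j) n * frise_seq (int j) (Suc n) =
        1 + (\<Prod>i\<in>{i. i \<le> m \<and> arr m ori j i}. frise_seq (int i) n)
          * (\<Prod>i\<in>{i. i \<le> m \<and> arr m ori i j}. frise_seq (int i) (Suc n))"
  proof (cases "ori j"; cases "ori ?p")
    assume "ori j" "ori ?p"
    then have E: "{i. i \<le> m \<and> arr m ori j i} = {?s}" "{i. i \<le> m \<and> arr m ori i j} = {?p}"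
      using out_set in_set ps by auto
    show ?thesis
      unfolding E using exch frise_seq_succ_fwd[of "int j" n] frise_seq_pred_fwd[of "int j" n]
        \<open>ori j\<close> \<open>ori ?p\<close>
      by (simp add: neighbours orient)
  next
    assume "ori j" "\<not> ori ?p"
    then have E: "{i. i \<le> m \<and> arr m ori j i} = {?s, ?p}" "{i. i \<le> m \<and> arr m ori i j} = {}"
      using out_set in_set ps by auto
    show ?thesis
      unfolding E using exch frise_seq_succ_fwd[of "int j" n] frise_seq_pred_bwd[of "int j" n]
        \<open>ori j\<close> \<open>\<not> ori ?p\<close> ps
      by (simp add: neighbours orient)
  next
    assume "\<not> ori j" "ori ?p"
    then have E: "{i. i \<le> m \<and> arr m ori j i} = {}" "{i. i \<le> m \<and> arr m ori i j} = {?p, ?s}"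
      using out_set in_set ps by auto
    show ?thesis
      unfolding E using exch frise_seq_succ_bwd[of "int j" n] frise_seq_pred_fwd[of "int j" n]
        \<open>\<not> ori j\<close> \<open>ori ?p\<close> ps
      by (simp add: neighbours orient mult.commute)
  next
    assume "\<not> ori j" "\<not> ori ?p"
    then have E: "{i. i \<le> m \<and> arr m ori j i} = {?p}" "{i. i \<le> m \<and> arr m ori i j} = {?s}"
      using out_set in_set ps by auto
    show ?thesis
      unfolding E using exch frise_seq_succ_bwd[of "int j" n] frise_seq_pred_bwd[of "int j" n]
        \<open>\<not> ori j\<close> \<open>\<not> ori ?p\<close>
      by (simp add: neighbours orient mult.commute)
  qed
qed

subsection \<open>Rationality of the rows\<close>

definition res :: "int \<Rightarrow> nat" where "res k = nat (k mod N)"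

lemma res_less: "res k < Suc m"
  using pos_mod_bound[of "int m + 1" k] by (simp add: res_def N_def nat_less_iff)

lemma int_res: "int (res k) = k mod N"
  using N_pos by (simp add: res_def)

lemma periodic_res: "(\<And>i. f (i + N) = f i) \<Longrightarrow> f i = f (int (res i))"
  unfolding int_res by (rule periodic_mod)

definition window :: "int \<Rightarrow> nat \<Rightarrow> laurent mat2" where
  "window j n = mat_prod (lpos j n) (nat (rpos j n - lpos j n))"

definition left_block :: "int \<Rightarrow> laurent mat2" where
  "left_block i = mat_prod (prev_bwd i) (nat (i - prev_bwd i))"

definition right_block :: "int \<Rightarrow> laurent mat2" where
  "right_block l = mat_prod l (nat (jump l - l))"

lemma frise_seq_window: "frise_seq j n = x_at (int (res (lpos j n))) * fst (window j n)"
  using periodic_res[of x_at, OF x_at_periodic] by (simp add: frise_seq_def lam_def window_def)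

lemma window_Suc:
  "window j (Suc n) = mat_mult (left_block (lpos j n)) (mat_mult (window j n) (right_block (rpos j n)))"
proof -
  define i where "i = lpos j n"
  define l where "l = rpos j n"
  have il: "i \<le> l" unfolding i_def l_def using lpos_le[of j n] rpos_ge[of j n] by simp
  have len: "nat (jump l - prev_bwd i) = nat (i - prev_bwd i) + (nat (l - i) + nat (jump l - l))"
    using il prev_bwd_less[of i] next_fwd_ge[of l] by (simp add: jump_def)
  have e1: "prev_bwd i + int (nat (i - prev_bwd i)) = i" using prev_bwd_less[of i] by simp
  have e2: "i + int (nat (l - i)) = l" using il by simp
  show ?thesis
    unfolding window_def lpos_Suc rpos_Suc i_def[symmetric] l_def[symmetric] len mat_prod_add e1 e2
      left_block_def right_block_def ..
qed

lemma left_block_res: "left_block i = left_block (int (res i))"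
  by (rule periodic_res) (simp add: left_block_def prev_bwd_periodic mat_prod_periodic)

lemma right_block_res: "right_block l = right_block (int (res l))"
  by (rule periodic_res) (simp add: right_block_def jump_periodic mat_prod_periodic)

text \<open>The state of the automaton: the residues of both ends of the window, encoded as one
  number below (m + 1)^2.  It evolves deterministically.\<close>

definition state :: "int \<Rightarrow> nat \<Rightarrow> nat" where
  "state j n = res (lpos j n) * Suc m + res (rpos j n)"

definition next_state :: "nat \<Rightarrow> nat" where
  "next_state p = res (prev_bwd (int (p div Suc m))) * Suc m + res (jump (int (p mod Suc m)))"

lemma mixed_radix:
  fixes a b c :: nat
  assumes "b < c"
  shows "(a * c + b) div c = a" and "(a * c + b) mod c = b"
  using assms by auto

lemma state_div: "state j n div Suc m = res (lpos j n)"
  and state_mod: "state j n mod Suc m = res (rpos j n)"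
  unfolding state_def using mixed_radix[OF res_less] by blast+

lemma state_less: "state j n < Suc m * Suc m"
proof -
  have "state j n < (res (lpos j n) + 1) * Suc m"
    using res_less[of "rpos j n"] by (simp add: state_def)
  also have "\<dots> \<le> Suc m * Suc m"
    using res_less[of "lpos j n"] by (intro mult_right_mono) auto
  finally show ?thesis .
qed

lemma state_Suc: "state j (Suc n) = next_state (state j n)"
proof -
  have "res (prev_bwd (int (res i))) = res (prev_bwd i)" for i
    using periodic_res[of "\<lambda>i. res (prev_bwd i)"] by (simp add: res_def prev_bwd_periodic)
  moreover have "res (jump (int (res l))) = res (jump l)" for l
    using periodic_res[of "\<lambda>l. res (jump l)"] by (simp add: res_def jump_periodic)
  ultimately show ?thesis
    unfolding next_state_def state_div state_mod by (simp add: state_def lpos_Suc rpos_Suc)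
qed

text \<open>Each row of the frieze is rational: the entries of the window matrix form a vector of
  length 4 multiplied at each level by a 4 x 4 matrix over K depending only on the state.\<close>

lemma frise_seq_rational: "rational_seq (Kset m) (frise_seq j)"
proof (rule automaton_rational[where P = "Suc m * Suc m" and d = 4 and ph = "state j" and g = next_state])
  show "state j n < Suc m * Suc m" for n by (rule state_less)
  define T where "T p r r' = mat_entry (left_block (int (p div Suc m))) (2 * (r' div 2) + r div 2)
      * mat_entry (right_block (int (p mod Suc m))) (2 * (r mod 2) + r' mod 2)" for p r r'
  show "mat_entry (window j (Suc n)) r' = (\<Sum>r<4. mat_entry (window j n) r * T (state j n) r r')"
    if "r' < 4" for n r'
    unfolding window_Suc mat_entry_sandwich[OF that] T_def state_div state_mod
      left_block_res[symmetric] right_block_res[symmetric] ..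
  show "T p r r' \<in> Kset m" for p r r'
    unfolding T_def left_block_def right_block_def using mat_entry_Kset mat_prod_Kset Kset_mult by blast
  show "frise_seq j n = (\<Sum>r<4. mat_entry (window j n) r * (if r = 0 then x_at (int (state j n div Suc m)) else 0))"
    for n
    by (cases "window j n") (simp add: sum_less_four frise_seq_window state_div mult.commute)
  show "mat_entry (window j 0) r \<in> Kset m" for r
    unfolding window_def by (rule mat_entry_Kset[OF mat_prod_Kset])
qed (simp_all add: state_Suc Kset_zero x_at_Kset)

end

theorem corollary2:
  fixes m :: nat and ori :: "nat \<Rightarrow> bool"
  assumes "m \<ge> 2"
    and "acyclic_orientation m ori"
  shows "\<exists>a. is_frise m ori a \<and> (\<forall>j\<le>m. rational_seq (Kset m) (a j))"
proof -
  interpret acyclic_cycle m ori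
    using assms by unfold_locales
  have "is_frise m ori (\<lambda>j n. frise_seq (int j) n)"
    by (rule frise_seq_is_frise)
  moreover have "rational_seq (Kset m) (frise_seq (int j))" for j
    by (rule frise_seq_rational)
  ultimately show ?thesis by blast
qed

end
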